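(* Let $\{\mathcal N,\gamma,\boldsymbol\ell,\ell^{(2)}\}$ be metric hypersurface data and $p\in\mathcal N$ a point with $\mathrm{Rad}(\gamma|_p)\neq\{0\}$. Then $$\mathrm{sign}(\boldsymbol{\mathcal A}|_p)=\{-1,1\}\sqcup\big(\mathrm{sign}(\gamma|_p)\setminus\{0\}\big),$$ where $\sqcup$ is disjoint union (of multisets). In particular, $\boldsymbol{\mathcal A}|_p$ has Lorentzian signature if and only if $\gamma|_p$ is positive semi-definite.
   Context: Metric hypersurface data: $\mathcal N$ a smooth manifold, $\gamma$ a symmetric $2$-covariant tensor field, $\boldsymbol\ell$ a one-form and $\ell^{(2)}$ a function such that for every $p$ the symmetric bilinear form $\boldsymbol{\mathcal A}|_p((W,a),(Z,b))=\gamma|_p(W,Z)+a\boldsymbol\ell|_p(Z)+b\boldsymbol\ell|_p(W)+ab\,\ell^{(2)}(p)$ on $T_p\mathcal N\times\mathbb R$ is non-degenerate. $\mathrm{Rad}(\gamma|_p)=\{X\in T_p\mathcal N:\gamma|_p(X,\cdot)=0\}$; for such data it is at most one-dimensional. The signature $\mathrm{sign}(q)$ of a quadratic form $q$ is the unordered multiset of diagonal entries ($0$, $-1$, $+1$) of its canonical form; $\mathrm{sign}(\gamma|_p)\setminus\{0\}$ means removing the single $0$ entry. *)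

theory Defs
  imports "HOL-Analysis.Analysis" "HOL-Library.Multiset"
begin

text \<open>Pointwise linear algebra: the tangent space T_pN is modelled by a finite-dimensional
real vector space (type of class euclidean_space); bilinear forms are functions 'a => 'a => real.\<close>

definition sym_bilinear_form :: "('a::euclidean_space \<Rightarrow> 'a \<Rightarrow> real) \<Rightarrow> bool" where
  "sym_bilinear_form B \<longleftrightarrow> bilinear B \<and> (\<forall>x y. B x y = B y x)"

definition canonical_basis :: "('a::euclidean_space \<Rightarrow> 'a \<Rightarrow> real) \<Rightarrow> 'a list \<Rightarrow> bool" where
  "canonical_basis B vs \<longleftrightarrow>
     length vs = DIM('a) \<and> distinct vs \<and> independent (set vs) \<and> span (set vs) = UNIV \<and>
     (\<forall>i<length vs. \<forall>j<length vs. i \<noteq> j \<longrightarrow> B (vs ! i) (vs ! j) = 0) \<and>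
     (\<forall>i<length vs. B (vs ! i) (vs ! i) \<in> {-1, 0, 1})"

definition signature :: "('a::euclidean_space \<Rightarrow> 'a \<Rightarrow> real) \<Rightarrow> real multiset" where
  "signature B = (THE M. \<exists>vs. canonical_basis B vs \<and> M = mset (map (\<lambda>v. B v v) vs))"

text \<open>The bilinear form A on T_pN x R built from hypersurface data at p.\<close>
definition hyp_form ::
  "('a::euclidean_space \<Rightarrow> 'a \<Rightarrow> real) \<Rightarrow> ('a \<Rightarrow> real) \<Rightarrow> real \<Rightarrow> ('a \<times> real) \<Rightarrow> ('a \<times> real) \<Rightarrow> real" where
  "hyp_form g l l2 X Y = g (fst X) (fst Y) + snd X * l (fst Y) + snd Y * l (fst X) + snd X * snd Y * l2"

definition nondegenerate :: "('a::euclidean_space \<Rightarrow> 'a \<Rightarrow> real) \<Rightarrow> bool" where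
  "nondegenerate B \<longleftrightarrow> (\<forall>X. (\<forall>Y. B X Y = 0) \<longrightarrow> X = 0)"

definition radical :: "('a::euclidean_space \<Rightarrow> 'a \<Rightarrow> real) \<Rightarrow> 'a set" where
  "radical B = {X. \<forall>Z. B X Z = 0}"

definition lorentzian_sig :: "real multiset \<Rightarrow> bool" where
  "lorentzian_sig M \<longleftrightarrow> M = add_mset (-1) (replicate_mset (size M - 1) 1)"

end

theory Submission
  imports Defs
begin

text \<open>
  By Sylvester's law of inertia the signature can be read off any basis that is orthogonal for
  the form and has diagonal entries in -1, 0, 1. Take such a basis of gamma. If gamma had two
  independent radical vectors, a combination X of them with l X = 0 would make (X, 0) lie in the
  radical of A; so, by nondegeneracy of A, exactly one basis vector n is null, and l n is nonzero.
  The remaining basis vectors e stay orthonormal as (e, 0) for A. Their A-orthogonal complement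
  is spanned by the isotropic vector (n, 0) and a vector (-t, 1) with gamma(e, t) = l e; these pair
  to l n, so they span a hyperbolic plane, which contributes the entries -1 and 1. Finally
  A is Lorentzian iff no -1 remains among the entries of gamma, i.e. iff gamma is positive
  semidefinite.
\<close>

abbreviation orthogonal_set :: "('a \<Rightarrow> 'a \<Rightarrow> real) \<Rightarrow> 'a set \<Rightarrow> bool" where
  "orthogonal_set B S \<equiv> pairwise (\<lambda>v w. B v w = 0) S"

definition canonical_basis_set :: "('a::euclidean_space \<Rightarrow> 'a \<Rightarrow> real) \<Rightarrow> 'a set \<Rightarrow> bool" where
  "canonical_basis_set B S \<longleftrightarrow>
     finite S \<and> independent S \<and> span S = UNIV \<and> orthogonal_set B S \<and> (\<forall>v\<in>S. B v v \<in> {-1, 0, 1})"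

lemma orthogonal_set_sum_right:
  assumes "bilinear B" "finite S" "orthogonal_set B S" "v \<in> S"
  shows "B v (\<Sum>w\<in>S. c w *\<^sub>R w) = c v * B v v"
proof -
  have "linear (B v)"
    using assms(1) by (simp add: bilinear_def)
  then have "B v (\<Sum>w\<in>S. c w *\<^sub>R w) = (\<Sum>w\<in>S. c w * B v w)"
    using assms(1) by (simp add: linear_sum bilinear_rmul)
  also have "\<dots> = (\<Sum>w\<in>S. if w = v then c v * B v v else 0)"
    using assms(3,4) by (intro sum.cong) (auto simp: pairwise_def)
  also have "\<dots> = c v * B v v"
    using assms(2,4) by simp
  finally show ?thesis .
qed

lemma orthogonal_set_quadratic_form:
  assumes "bilinear B" "finite S" "orthogonal_set B S"
  shows "B (\<Sum>v\<in>S. c v *\<^sub>R v) (\<Sum>v\<in>S. c v *\<^sub>R v) = (\<Sum>v\<in>S. (c v)\<^sup>2 * B v v)"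
proof -
  have "linear (\<lambda>x. B x y)" for y
    using assms(1) by (simp add: bilinear_def)
  from linear_sum[OF this, of "\<lambda>v. c v *\<^sub>R v" S]
  have "B (\<Sum>v\<in>S. c v *\<^sub>R v) (\<Sum>v\<in>S. c v *\<^sub>R v)
      = (\<Sum>v\<in>S. c v * B v (\<Sum>v\<in>S. c v *\<^sub>R v))"
    using assms(1) by (simp add: bilinear_lmul)
  also have "\<dots> = (\<Sum>v\<in>S. (c v)\<^sup>2 * B v v)"
    using orthogonal_set_sum_right[OF assms] by (intro sum.cong) (auto simp: power2_eq_square)
  finally show ?thesis .
qed

lemma orthogonal_set_independent:
  fixes B :: "'a::euclidean_space \<Rightarrow> 'a \<Rightarrow> real"
  assumes "bilinear B" "finite S" "orthogonal_set B S" "\<forall>v\<in>S. B v v \<noteq> 0"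
  shows "independent S"
  unfolding independent_explicit
proof (intro conjI assms allI impI ballI)
  fix c v
  assume "(\<Sum>v\<in>S. c v *\<^sub>R v) = 0" "v \<in> S"
  then have "c v * B v v = 0"
    using orthogonal_set_sum_right[OF assms(1-3), of v c] assms(1) by (simp add: bilinear_rzero)
  then show "c v = 0"
    using assms(4) \<open>v \<in> S\<close> by simp
qed

lemma orthogonal_set_dual_vector:
  assumes "bilinear B" "finite E" "orthogonal_set B E" "\<forall>e\<in>E. B e e \<in> {-1, 1}"
  obtains t where "\<And>e. e \<in> E \<Longrightarrow> B e t = f e"
proof
  fix e
  assume "e \<in> E"
  then show "B e (\<Sum>w\<in>E. (B w w * f w) *\<^sub>R w) = f e"
    using orthogonal_set_sum_right[OF assms(1-3) \<open>e \<in> E\<close>] assms(4) by auto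
qed

lemma orthogonal_set_insert_anisotropic:
  assumes "\<forall>x y. B x y = B y x" "orthogonal_set B S" "B v v \<noteq> 0" "\<forall>s\<in>S. B s v = 0"
  shows "orthogonal_set B (insert v S)" "v \<notin> S"
  using assms by (auto simp: pairwise_insert)

lemma sym_bilinear_form_combination:
  assumes "sym_bilinear_form B"
  shows "B (a *\<^sub>R x + b *\<^sub>R y) (a' *\<^sub>R x + b' *\<^sub>R y)
           = a * a' * B x x + (a * b' + a' * b) * B x y + b * b' * B y y"
  using assms
  by (simp add: sym_bilinear_form_def bilinear_ladd bilinear_radd bilinear_lmul bilinear_rmul
      algebra_simps)

lemma bilinear_normalize_anisotropic:
  fixes B :: "'a::real_vector \<Rightarrow> 'a \<Rightarrow> real"
  assumes "bilinear B" "B x x \<noteq> 0"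
  obtains a where "B (a *\<^sub>R x) (a *\<^sub>R x) \<in> {-1, 1}"
proof
  have "B ((1 / sqrt \<bar>B x x\<bar>) *\<^sub>R x) ((1 / sqrt \<bar>B x x\<bar>) *\<^sub>R x) = B x x / \<bar>B x x\<bar>"
    using assms(1) by (simp add: bilinear_lmul bilinear_rmul power2_eq_square[symmetric])
  then show "B ((1 / sqrt \<bar>B x x\<bar>) *\<^sub>R x) ((1 / sqrt \<bar>B x x\<bar>) *\<^sub>R x) \<in> {-1, 1}"
    using assms(2) by (auto simp: abs_if)
qed

lemma sym_bilinear_form_totally_isotropic:
  assumes "sym_bilinear_form B" "subspace V" "\<forall>x\<in>V. B x x = 0" "x \<in> V" "y \<in> V"
  shows "B x y = 0"
  using sym_bilinear_form_combination[OF assms(1), of 1 x 1 y 1 1] assms(2-5) by (simp add: subspace_add)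

lemma subspace_orthogonal_in_subspace:
  assumes "bilinear B" "subspace V"
  shows "subspace {y\<in>V. B v y = 0}"
  using assms by (auto simp: subspace_def bilinear_radd bilinear_rmul bilinear_rzero)

lemma dim_orthogonal_in_subspace_less:
  fixes V :: "'a::euclidean_space set"
  assumes "bilinear B" "subspace V" "v \<in> V" "B v v \<noteq> 0"
  shows "dim {y\<in>V. B v y = 0} < dim V"
proof -
  have "{y\<in>V. B v y = 0} \<subset> V"
    using assms(3,4) by force
  then show ?thesis
    using subspace_orthogonal_in_subspace[OF assms(1,2)] assms(2) by (metis dim_psubset span_eq_iff)
qed

lemma subset_span_insert_orthogonal_in_subspace:
  fixes B :: "'a::real_vector \<Rightarrow> 'a \<Rightarrow> real"
  assumes "bilinear B" "subspace V" "v \<in> V" "B v v \<noteq> 0" "{y\<in>V. B v y = 0} \<subseteq> span S"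
  shows "V \<subseteq> span (insert v S)"
proof
  fix y
  assume "y \<in> V"
  then have "y - (B v y / B v v) *\<^sub>R v \<in> {y\<in>V. B v y = 0}"
    using assms(1-4) by (auto simp: subspace_diff subspace_mul bilinear_rsub bilinear_rmul)
  then have "y - (B v y / B v v) *\<^sub>R v \<in> span (insert v S)"
    using assms(5) span_mono[of S "insert v S"] by auto
  then show "y \<in> span (insert v S)"
    by (metis diff_add_cancel insertI1 span_add span_base span_mul)
qed

lemma orthogonal_basis_of_subspace_exists:
  fixes B :: "'a::euclidean_space \<Rightarrow> 'a \<Rightarrow> real"
  assumes "sym_bilinear_form B" "subspace V"
  shows "\<exists>S\<subseteq>V. independent S \<and> V \<subseteq> span S \<and> orthogonal_set B S \<and> (\<forall>v\<in>S. B v v \<in> {-1, 0, 1})"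
  using assms(2)
proof (induction "dim V" arbitrary: V rule: less_induct)
  case less
  have bl: "bilinear B" and sy: "\<forall>x y. B x y = B y x"
    using assms(1) by (auto simp: sym_bilinear_form_def)
  show ?case
  proof (cases "\<forall>x\<in>V. B x x = 0")
    case True
    obtain S where "S \<subseteq> V" "independent S" "V \<subseteq> span S"
      by (metis basis_exists)
    then show ?thesis
      using True sym_bilinear_form_totally_isotropic[OF assms(1) less.prems True]
      by (auto simp: pairwise_def subset_iff)
  next
    case False
    then obtain x where "x \<in> V" "B x x \<noteq> 0"
      by blast
    then obtain a where "B (a *\<^sub>R x) (a *\<^sub>R x) \<in> {-1, 1}"
      using bilinear_normalize_anisotropic[OF bl] by metis
    moreover define v where "v = a *\<^sub>R x"
    ultimately have v: "v \<in> V" "B v v \<in> {-1, 1}"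
      using \<open>x \<in> V\<close> less.prems by (simp_all add: subspace_mul)
    define V' where "V' = {y\<in>V. B v y = 0}"
    have "subspace V'" "dim V' < dim V"
      using subspace_orthogonal_in_subspace[OF bl less.prems]
        dim_orthogonal_in_subspace_less[OF bl less.prems] v by (auto simp: V'_def)
    then obtain S' where S': "S' \<subseteq> V'" "independent S'" "V' \<subseteq> span S'"
      "orthogonal_set B S'" "\<forall>w\<in>S'. B w w \<in> {-1, 0, 1}"
      using less.hyps by blast
    have "v \<notin> span S'"
      using span_minimal[OF S'(1) \<open>subspace V'\<close>] v(2) by (auto simp: V'_def)
    then have "independent (insert v S')"
      using S'(2) span_base by (auto simp: independent_insert)
    moreover have "V \<subseteq> span (insert v S')"
      using subset_span_insert_orthogonal_in_subspace[OF bl less.prems v(1) _ S'(3)[unfolded V'_def]] v(2)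
      by auto
    moreover have "orthogonal_set B (insert v S')"
      using S'(1,4) sy by (auto simp: V'_def pairwise_insert)
    moreover have "insert v S' \<subseteq> V" "\<forall>w\<in>insert v S'. B w w \<in> {-1, 0, 1}"
      using S'(1,5) v by (auto simp: V'_def)
    ultimately show ?thesis
      by blast
  qed
qed

lemma canonical_basis_set_exists:
  assumes "sym_bilinear_form B"
  obtains S where "canonical_basis_set B S"
  using orthogonal_basis_of_subspace_exists[OF assms subspace_UNIV] finiteI_independent
  by (auto simp: canonical_basis_set_def)

lemma canonical_basis_set_expansion:
  assumes "canonical_basis_set B S"
  obtains c where "x = (\<Sum>v\<in>S. c v *\<^sub>R v)"
proof -
  have "x \<in> range (\<lambda>c. \<Sum>v\<in>S. c v *\<^sub>R v)"
    using assms span_finite[of S] by (simp add: canonical_basis_set_def)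
  then show ?thesis
    using that by blast
qed

lemma canonical_basis_set_card:
  fixes S :: "'a::euclidean_space set"
  assumes "canonical_basis_set B S"
  shows "card S = DIM('a)"
  using assms dim_span_eq_card_independent[of S] by (simp add: canonical_basis_set_def)

lemma canonical_basis_set_of_orthogonal:
  fixes B :: "'a::euclidean_space \<Rightarrow> 'a \<Rightarrow> real"
  assumes "bilinear B" "finite S" "orthogonal_set B S" "\<forall>v\<in>S. B v v \<in> {-1, 1}"
    and "card S = DIM('a)"
  shows "canonical_basis_set B S"
proof -
  have "independent S"
    using orthogonal_set_independent[OF assms(1-3)] assms(4) by force
  then have "span S = UNIV"
    using card_ge_dim_independent[of S UNIV] assms(5) by auto
  then show ?thesis
    using \<open>independent S\<close> assms(2-4) by (auto simp: canonical_basis_set_def)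
qed

lemma card_filter_add_card_filter_not:
  assumes "finite A"
  shows "card {x\<in>A. P x} + card {x\<in>A. \<not> P x} = card A"
proof -
  have "card A = card ({x\<in>A. P x} \<union> {x\<in>A. \<not> P x})"
    by (rule arg_cong[where f = card]) blast
  also have "\<dots> = card {x\<in>A. P x} + card {x\<in>A. \<not> P x}"
    using assms by (intro card_Un_disjoint) auto
  finally show ?thesis ..
qed

lemma dim_add_dim_le_DIM:
  fixes U W :: "'a::euclidean_space set"
  assumes "subspace U" "subspace W" "U \<inter> W \<subseteq> {0}"
  shows "dim U + dim W \<le> DIM('a)"
proof -
  have "U \<inter> W = {0}"
    using assms subspace_0 by blast
  then show ?thesis
    using dim_sums_Int[OF assms(1,2)] dim_subset_UNIV[of "{x + y |x y. x \<in> U \<and> y \<in> W}"] by simp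
qed

lemma orthogonal_set_positive_span_Int_nonpositive_span:
  assumes bl: "bilinear B"
    and P: "finite P" "orthogonal_set B P" "\<forall>v\<in>P. B v v > 0"
    and Q: "finite Q" "orthogonal_set B Q" "\<forall>v\<in>Q. B v v \<le> 0"
  shows "span P \<inter> span Q \<subseteq> {0}"
proof
  fix x
  assume "x \<in> span P \<inter> span Q"
  then obtain c where c: "x = (\<Sum>v\<in>P. c v *\<^sub>R v)"
    using span_finite[OF P(1)] by auto
  obtain d where d: "x = (\<Sum>v\<in>Q. d v *\<^sub>R v)"
    using \<open>x \<in> span P \<inter> span Q\<close> span_finite[OF Q(1)] by auto
  have "(\<Sum>v\<in>P. (c v)\<^sup>2 * B v v) = B x x"
    using orthogonal_set_quadratic_form[OF bl P(1,2)] c by simp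
  also have "\<dots> = (\<Sum>v\<in>Q. (d v)\<^sup>2 * B v v)"
    using orthogonal_set_quadratic_form[OF bl Q(1,2)] d by simp
  also have "\<dots> \<le> 0"
    using Q(3) by (intro sum_nonpos) (simp add: mult_nonneg_nonpos)
  finally have "(\<Sum>v\<in>P. (c v)\<^sup>2 * B v v) \<le> 0" .
  moreover have nonneg: "\<forall>v\<in>P. 0 \<le> (c v)\<^sup>2 * B v v"
    using P(3) by (simp add: less_imp_le)
  then have "0 \<le> (\<Sum>v\<in>P. (c v)\<^sup>2 * B v v)"
    by (simp add: sum_nonneg)
  ultimately have "(\<Sum>v\<in>P. (c v)\<^sup>2 * B v v) = 0"
    by linarith
  then have "\<forall>v\<in>P. (c v)\<^sup>2 * B v v = 0"
    using sum_nonneg_eq_0_iff[OF P(1), of "\<lambda>v. (c v)\<^sup>2 * B v v"] nonneg by simp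
  then have "\<forall>v\<in>P. c v = 0"
    using P(3) by (metis less_irrefl mult_eq_0_iff power_eq_0_iff)
  then show "x \<in> {0}"
    using c by simp
qed

lemma canonical_basis_set_card_positive_le:
  fixes B :: "'a::euclidean_space \<Rightarrow> 'a \<Rightarrow> real"
  assumes bl: "bilinear B" and S: "canonical_basis_set B S" and T: "canonical_basis_set B T"
  shows "card {v\<in>S. B v v = 1} \<le> card {v\<in>T. B v v = 1}"
proof -
  define P where "P = {v\<in>S. B v v = 1}"
  define Q where "Q = {v\<in>T. B v v \<noteq> 1}"
  have P: "finite P" "independent P" "orthogonal_set B P" "\<forall>v\<in>P. B v v > 0"
    using S independent_mono[of S P] by (auto simp: canonical_basis_set_def P_def pairwise_def)
  have Q: "finite Q" "independent Q" "orthogonal_set B Q" "\<forall>v\<in>Q. B v v \<le> 0"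
    using T independent_mono[of T Q] by (auto simp: canonical_basis_set_def Q_def pairwise_def)
  have "card P + card Q \<le> DIM('a)"
    using dim_add_dim_le_DIM[of "span P" "span Q"]
      orthogonal_set_positive_span_Int_nonpositive_span[OF bl P(1,3,4) Q(1,3,4)]
    by (simp add: dim_eq_card_independent[OF P(2)] dim_eq_card_independent[OF Q(2)])
  moreover have "card {v\<in>T. B v v = 1} + card Q = DIM('a)"
    using card_filter_add_card_filter_not[of T] T canonical_basis_set_card[OF T]
    by (simp add: Q_def canonical_basis_set_def)
  ultimately show ?thesis
    by (simp add: P_def)
qed

lemma canonical_basis_set_uminus:
  "canonical_basis_set B S \<Longrightarrow> canonical_basis_set (\<lambda>x y. - B x y) S"
  by (auto simp: canonical_basis_set_def pairwise_def)

lemma canonical_basis_set_card_split: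
  assumes "canonical_basis_set B S"
  shows "card S = card {v\<in>S. B v v = 1} + card {v\<in>S. B v v = -1} + card {v\<in>S. B v v = 0}"
proof -
  have fin: "finite S"
    using assms by (simp add: canonical_basis_set_def)
  have "S = ({v\<in>S. B v v = 1} \<union> {v\<in>S. B v v = -1}) \<union> {v\<in>S. B v v = 0}"
    using assms by (auto simp: canonical_basis_set_def)
  then have "card S = card ({v\<in>S. B v v = 1} \<union> {v\<in>S. B v v = -1}) + card {v\<in>S. B v v = 0}"
    using fin by (subst card_Un_disjoint[symmetric]) auto
  also have "card ({v\<in>S. B v v = 1} \<union> {v\<in>S. B v v = -1}) = card {v\<in>S. B v v = 1} + card {v\<in>S. B v v = -1}"
    using fin by (intro card_Un_disjoint) auto
  finally show ?thesis .
qed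

lemma count_image_mset_mset_set:
  assumes "finite S"
  shows "count (image_mset f (mset_set S)) r = card {v\<in>S. f v = r}"
proof -
  have "count (image_mset f (mset_set S)) r = card (f -` {r} \<inter> S)"
    using assms by (simp add: count_image_mset)
  also have "f -` {r} \<inter> S = {v\<in>S. f v = r}"
    by auto
  finally show ?thesis .
qed

theorem sylvester_law_of_inertia:
  fixes B :: "'a::euclidean_space \<Rightarrow> 'a \<Rightarrow> real"
  assumes bl: "bilinear B" and S: "canonical_basis_set B S" and T: "canonical_basis_set B T"
  shows "image_mset (\<lambda>v. B v v) (mset_set S) = image_mset (\<lambda>v. B v v) (mset_set T)"
proof (rule multiset_eqI)
  fix r
  have bl_uminus: "bilinear (\<lambda>x y. - B x y)"
    using bl by (simp add: bilinear_def linear_iff)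
  have pos: "card {v\<in>S. B v v = 1} = card {v\<in>T. B v v = 1}"
    using canonical_basis_set_card_positive_le[OF bl S T] canonical_basis_set_card_positive_le[OF bl T S]
    by simp
  have neg: "card {v\<in>S. B v v = -1} = card {v\<in>T. B v v = -1}"
    using canonical_basis_set_card_positive_le[OF bl_uminus, of S T]
      canonical_basis_set_card_positive_le[OF bl_uminus, of T S]
      canonical_basis_set_uminus[OF S] canonical_basis_set_uminus[OF T]
    by (simp add: minus_equation_iff eq_commute[of "-1::real"])
  have zero: "card {v\<in>S. B v v = 0} = card {v\<in>T. B v v = 0}"
    using canonical_basis_set_card_split[OF S] canonical_basis_set_card_split[OF T]
      canonical_basis_set_card[OF S] canonical_basis_set_card[OF T] pos neg by simp
  have "card {v\<in>S. B v v = r} = card {v\<in>T. B v v = r}"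
  proof (cases "r \<in> {-1, 0, 1}")
    case True
    then show ?thesis
      using pos neg zero by auto
  next
    case False
    then have "{v\<in>S. B v v = r} = {}" "{v\<in>T. B v v = r} = {}"
      using S T by (auto simp: canonical_basis_set_def)
    then show ?thesis
      by (simp only:)
  qed
  then show "count (image_mset (\<lambda>v. B v v) (mset_set S)) r = count (image_mset (\<lambda>v. B v v) (mset_set T)) r"
    using S T by (simp add: count_image_mset_mset_set canonical_basis_set_def)
qed

lemma canonical_basis_iff_canonical_basis_set:
  fixes B :: "'a::euclidean_space \<Rightarrow> 'a \<Rightarrow> real"
  shows "canonical_basis B vs \<longleftrightarrow> distinct vs \<and> canonical_basis_set B (set vs)"
proof
  assume vs: "canonical_basis B vs"
  have "orthogonal_set B (set vs)"
    unfolding pairwise_def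
  proof (intro ballI impI)
    fix v w
    assume "v \<in> set vs" "w \<in> set vs" "v \<noteq> w"
    then obtain i j where "i < length vs" "j < length vs" "v = vs ! i" "w = vs ! j" "i \<noteq> j"
      by (metis in_set_conv_nth)
    then show "B v w = 0"
      using vs by (simp add: canonical_basis_def)
  qed
  moreover have "\<forall>v\<in>set vs. B v v \<in> {-1, 0, 1}"
    using vs unfolding canonical_basis_def by (metis in_set_conv_nth)
  ultimately show "distinct vs \<and> canonical_basis_set B (set vs)"
    using vs by (simp add: canonical_basis_def canonical_basis_set_def)
next
  assume vs: "distinct vs \<and> canonical_basis_set B (set vs)"
  then have "length vs = DIM('a)"
    using canonical_basis_set_card distinct_card by metis
  moreover have "\<forall>i<length vs. \<forall>j<length vs. i \<noteq> j \<longrightarrow> B (vs ! i) (vs ! j) = 0"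
    using vs unfolding canonical_basis_set_def pairwise_def by (metis nth_eq_iff_index_eq nth_mem)
  ultimately show "canonical_basis B vs"
    using vs by (simp add: canonical_basis_def canonical_basis_set_def)
qed

lemma signature_eq_canonical_basis_set:
  fixes B :: "'a::euclidean_space \<Rightarrow> 'a \<Rightarrow> real"
  assumes bl: "bilinear B" and S: "canonical_basis_set B S"
  shows "signature B = image_mset (\<lambda>v. B v v) (mset_set S)"
  unfolding signature_def
proof (rule the_equality)
  obtain vs where vs: "set vs = S" "distinct vs"
    using S finite_distinct_list by (metis canonical_basis_set_def)
  then have "canonical_basis B vs"
    using S canonical_basis_iff_canonical_basis_set by blast
  moreover have "image_mset (\<lambda>v. B v v) (mset_set S) = mset (map (\<lambda>v. B v v) vs)"
    using vs by (metis mset_set_set mset_map)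
  ultimately show "\<exists>vs. canonical_basis B vs \<and> image_mset (\<lambda>v. B v v) (mset_set S) = mset (map (\<lambda>v. B v v) vs)"
    by blast
next
  fix M
  assume "\<exists>vs. canonical_basis B vs \<and> M = mset (map (\<lambda>v. B v v) vs)"
  then obtain vs where "canonical_basis B vs" and M: "M = mset (map (\<lambda>v. B v v) vs)"
    by blast
  then have "distinct vs" and vs: "canonical_basis_set B (set vs)"
    using canonical_basis_iff_canonical_basis_set by blast+
  then show "M = image_mset (\<lambda>v. B v v) (mset_set S)"
    using M sylvester_law_of_inertia[OF bl vs S] mset_set_set[OF \<open>distinct vs\<close>] by simp
qed

lemma sym_bilinear_form_nonneg_iff_signature:
  assumes "sym_bilinear_form B"
  shows "(\<forall>x. 0 \<le> B x x) \<longleftrightarrow> -1 \<notin># signature B"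
proof -
  have bl: "bilinear B"
    using assms by (simp add: sym_bilinear_form_def)
  obtain S where S: "canonical_basis_set B S"
    using canonical_basis_set_exists[OF assms] .
  then have fin: "finite S" and orth: "orthogonal_set B S"
    and diag: "\<forall>v\<in>S. B v v \<in> {-1, 0, 1}"
    by (auto simp: canonical_basis_set_def)
  have "(\<forall>x. 0 \<le> B x x) \<longleftrightarrow> (\<forall>v\<in>S. 0 \<le> B v v)"
  proof
    assume "\<forall>v\<in>S. 0 \<le> B v v"
    show "\<forall>x. 0 \<le> B x x"
    proof
      fix x
      obtain c where "x = (\<Sum>v\<in>S. c v *\<^sub>R v)"
        using canonical_basis_set_expansion[OF S] .
      then have "B x x = (\<Sum>v\<in>S. (c v)\<^sup>2 * B v v)"
        using orthogonal_set_quadratic_form[OF bl fin orth] by simp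
      also have "\<dots> \<ge> 0"
        using \<open>\<forall>v\<in>S. 0 \<le> B v v\<close> by (intro sum_nonneg) simp
      finally show "0 \<le> B x x" .
    qed
  qed simp
  also have "\<dots> \<longleftrightarrow> -1 \<notin># signature B"
    using diag fin by (force simp: signature_eq_canonical_basis_set[OF bl S])
  finally show ?thesis .
qed

lemma sym_bilinear_form_hyperbolic_pair:
  assumes B: "sym_bilinear_form B" and "B x x = 0" "B x y \<noteq> 0"
  obtains p q where "B p p = 1" "B q q = -1" "B p q = 0"
    "\<And>z. B z x = 0 \<Longrightarrow> B z y = 0 \<Longrightarrow> B z p = 0 \<and> B z q = 0"
proof
  \<comment> \<open>p = a x + b y and q = a' x + b y, where a (resp. a') solves 2 a b B x y + b b B y y = 1 (resp. -1).\<close>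
  define b where "b = 1 / sqrt 2"
  define a where "a = (1 - B y y / 2) / (sqrt 2 * B x y)"
  define a' where "a' = (-1 - B y y / 2) / (sqrt 2 * B x y)"
  have b2: "b * b = 1 / 2"
    by (simp add: b_def)
  have ab: "a * b * B x y = (1 - B y y / 2) / 2" and a'b: "a' * b * B x y = (-1 - B y y / 2) / 2"
    using assms(3) by (simp_all add: a_def a'_def b_def)
  have "B (a *\<^sub>R x + b *\<^sub>R y) (a *\<^sub>R x + b *\<^sub>R y) = 2 * (a * b * B x y) + b * b * B y y"
    using sym_bilinear_form_combination[OF B] assms(2) by (simp add: algebra_simps)
  then show "B (a *\<^sub>R x + b *\<^sub>R y) (a *\<^sub>R x + b *\<^sub>R y) = 1"
    using ab b2 by (simp add: field_simps)
  have "B (a' *\<^sub>R x + b *\<^sub>R y) (a' *\<^sub>R x + b *\<^sub>R y) = 2 * (a' * b * B x y) + b * b * B y y"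
    using sym_bilinear_form_combination[OF B] assms(2) by (simp add: algebra_simps)
  then show "B (a' *\<^sub>R x + b *\<^sub>R y) (a' *\<^sub>R x + b *\<^sub>R y) = -1"
    using a'b b2 by (simp add: field_simps)
  have "B (a *\<^sub>R x + b *\<^sub>R y) (a' *\<^sub>R x + b *\<^sub>R y) = a * b * B x y + a' * b * B x y + b * b * B y y"
    using sym_bilinear_form_combination[OF B] assms(2) by (simp add: algebra_simps)
  then show "B (a *\<^sub>R x + b *\<^sub>R y) (a' *\<^sub>R x + b *\<^sub>R y) = 0"
    using ab a'b b2 by (simp add: field_simps)
  show "B z (a *\<^sub>R x + b *\<^sub>R y) = 0 \<and> B z (a' *\<^sub>R x + b *\<^sub>R y) = 0"
    if "B z x = 0" "B z y = 0" for z
    using B that by (simp add: sym_bilinear_form_def bilinear_radd bilinear_rmul)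
qed

lemma subspace_radical:
  assumes "bilinear B"
  shows "subspace (radical B)"
  using assms by (auto simp: subspace_def radical_def bilinear_ladd bilinear_lmul bilinear_lzero)

lemma canonical_basis_set_isotropic_in_radical:
  assumes "bilinear B" "canonical_basis_set B S" "v \<in> S" "B v v = 0"
  shows "v \<in> radical B"
proof -
  have "B v x = 0" for x
  proof -
    obtain c where "x = (\<Sum>w\<in>S. c w *\<^sub>R w)"
      using canonical_basis_set_expansion[OF assms(2)] .
    then show ?thesis
      using assms orthogonal_set_sum_right[OF assms(1), of S v c] by (simp add: canonical_basis_set_def)
  qed
  then show ?thesis
    by (simp add: radical_def)
qed

lemma canonical_basis_set_isotropic_exists:
  assumes B: "sym_bilinear_form B" and S: "canonical_basis_set B S" and "radical B \<noteq> {0}"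
  shows "\<exists>v\<in>S. B v v = 0"
proof (rule ccontr)
  assume "\<not> (\<exists>v\<in>S. B v v = 0)"
  have bl: "bilinear B"
    using B by (simp add: sym_bilinear_form_def)
  obtain x where x: "x \<in> radical B" "x \<noteq> 0"
    using assms(3) subspace_0[OF subspace_radical[OF bl]] by blast
  obtain c where c: "x = (\<Sum>v\<in>S. c v *\<^sub>R v)"
    using canonical_basis_set_expansion[OF S] .
  have "c v = 0" if "v \<in> S" for v
  proof -
    have "c v * B v v = B v x"
      using c S orthogonal_set_sum_right[OF bl _ _ that] by (simp add: canonical_basis_set_def)
    also have "\<dots> = 0"
      using x(1) B by (simp add: radical_def sym_bilinear_form_def)
    finally show ?thesis
      using \<open>\<not> (\<exists>v\<in>S. B v v = 0)\<close> that by simp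
  qed
  then show False
    using c x(2) by simp
qed

lemma hyp_form_sym_bilinear:
  assumes "sym_bilinear_form g" "linear l"
  shows "sym_bilinear_form (hyp_form g l l2)"
proof -
  have "l (x + y) = l x + l y" "l (c *\<^sub>R x) = c * l x" for x y c
    using assms(2) by (auto simp: linear_iff)
  then show ?thesis
    using assms(1)
    unfolding sym_bilinear_form_def bilinear_def linear_iff hyp_form_def
    by (auto simp: bilinear_ladd bilinear_radd bilinear_lmul bilinear_rmul algebra_simps)
qed

lemma hyp_form_nondegenerate_radical_kernel:
  assumes "nondegenerate (hyp_form g l l2)" "x \<in> radical g" "l x = 0"
  shows "x = 0"
proof -
  have "\<forall>Y. hyp_form g l l2 (x, 0) Y = 0"
    using assms(2,3) by (simp add: hyp_form_def radical_def)
  then have "(x, 0::real) = 0"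
    using assms(1) by (simp add: nondegenerate_def)
  then show ?thesis
    by (simp add: zero_prod_def)
qed

lemma hyp_form_unique_isotropic_basis_vector:
  assumes g: "sym_bilinear_form g" and l: "linear l" and nd: "nondegenerate (hyp_form g l l2)"
    and "radical g \<noteq> {0}" and S: "canonical_basis_set g S"
  obtains n E where "S = insert n E" "n \<notin> E" "n \<in> radical g" "l n \<noteq> 0" "\<forall>e\<in>E. g e e \<noteq> 0"
proof -
  have bl: "bilinear g"
    using g by (simp add: sym_bilinear_form_def)
  have indep: "independent S"
    using S by (simp add: canonical_basis_set_def)
  obtain n where n: "n \<in> S" "g n n = 0"
    using canonical_basis_set_isotropic_exists[OF g S \<open>radical g \<noteq> {0}\<close>] by blast
  then have rad_n: "n \<in> radical g"
    using canonical_basis_set_isotropic_in_radical[OF bl S] by blast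
  have "n \<noteq> 0"
    using indep n(1) dependent_zero by blast
  then have ln: "l n \<noteq> 0"
    using hyp_form_nondegenerate_radical_kernel[OF nd rad_n] by blast
  have "g v v \<noteq> 0" if v: "v \<in> S - {n}" for v
  proof
    assume "g v v = 0"
    then have "v \<in> radical g"
      using canonical_basis_set_isotropic_in_radical[OF bl S] v by blast
    then have "l v *\<^sub>R n - l n *\<^sub>R v \<in> radical g"
      using rad_n subspace_radical[OF bl] by (simp add: subspace_diff subspace_mul)
    moreover have "l (l v *\<^sub>R n - l n *\<^sub>R v) = 0"
      using l by (simp add: linear_diff linear_scale)
    ultimately have "l v *\<^sub>R n - l n *\<^sub>R v = 0"
      by (rule hyp_form_nondegenerate_radical_kernel[OF nd])
    then have "v = (l v / l n) *\<^sub>R n"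
      using ln by (metis eq_iff_diff_eq_0 vector_fraction_eq_iff)
    moreover have "n \<in> span (S - {v})"
      using n(1) v by (intro span_base) auto
    ultimately have "v \<in> span (S - {v})"
      by (metis span_mul)
    then show False
      using indep v dependent_def by blast
  qed
  then show thesis
    using that[of n "S - {n}"] n(1) rad_n ln by blast
qed

lemma canonical_basis_set_insert_hyperbolic_pair:
  fixes B :: "'a::euclidean_space \<Rightarrow> 'a \<Rightarrow> real"
  assumes B: "sym_bilinear_form B"
    and T: "finite T" "orthogonal_set B T" "\<forall>v\<in>T. B v v \<in> {-1, 1}" "card T + 2 = DIM('a)"
    and pq: "B p p = 1" "B q q = -1" "B p q = 0" and perp: "\<forall>s\<in>T. B s p = 0 \<and> B s q = 0"
  shows "canonical_basis_set B (insert p (insert q T))"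
    and "image_mset (\<lambda>v. B v v) (mset_set (insert p (insert q T)))
           = {#-1, 1#} + image_mset (\<lambda>v. B v v) (mset_set T)"
proof -
  have bl: "bilinear B" and sy: "\<forall>x y. B x y = B y x"
    using B by (auto simp: sym_bilinear_form_def)
  have "orthogonal_set B (insert q T)" "q \<notin> T"
    using orthogonal_set_insert_anisotropic[OF sy T(2)] pq(2) perp by simp_all
  moreover have "\<forall>s\<in>insert q T. B s p = 0"
    using perp pq(3) sy[rule_format, of q p] by simp
  ultimately have orth: "orthogonal_set B (insert p (insert q T))" and "p \<notin> insert q T"
    using orthogonal_set_insert_anisotropic[OF sy, of "insert q T" p] pq(1) by simp_all
  then have "card (insert p (insert q T)) = DIM('a)"
    using T(1,4) \<open>q \<notin> T\<close> by simp
  then show "canonical_basis_set B (insert p (insert q T))"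
    using canonical_basis_set_of_orthogonal[OF bl _ orth] T(1,3) pq(1,2) by simp
  show "image_mset (\<lambda>v. B v v) (mset_set (insert p (insert q T)))
      = {#-1, 1#} + image_mset (\<lambda>v. B v v) (mset_set T)"
    using T(1) \<open>p \<notin> insert q T\<close> \<open>q \<notin> T\<close> pq(1,2) by simp
qed

lemma hyp_form_hyperbolic_pair:
  assumes g: "sym_bilinear_form g" and l: "linear l"
    and E: "finite E" "orthogonal_set g E" "\<forall>e\<in>E. g e e \<in> {-1, 1}"
    and n: "n \<in> radical g" "l n \<noteq> 0"
  obtains p q where "hyp_form g l l2 p p = 1" "hyp_form g l l2 q q = -1" "hyp_form g l l2 p q = 0"
    "\<forall>e\<in>E. hyp_form g l l2 (e, 0) p = 0 \<and> hyp_form g l l2 (e, 0) q = 0"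
proof -
  let ?A = "hyp_form g l l2"
  have bl: "bilinear g" and sy: "\<forall>x y. g x y = g y x"
    using g by (auto simp: sym_bilinear_form_def)
  \<comment> \<open>t is chosen so that (-t, 1), like (n, 0), is A-orthogonal to every (e, 0).\<close>
  obtain t where t: "\<And>e. e \<in> E \<Longrightarrow> g e t = l e"
    using orthogonal_set_dual_vector[OF bl E, of l] by blast
  have "?A (n, 0) (n, 0) = 0" "?A (n, 0) (-t, 1) \<noteq> 0"
    using n by (auto simp: hyp_form_def radical_def)
  then obtain p q where pq: "?A p p = 1" "?A q q = -1" "?A p q = 0"
    and perp: "\<And>z. ?A z (n, 0) = 0 \<Longrightarrow> ?A z (-t, 1) = 0 \<Longrightarrow> ?A z p = 0 \<and> ?A z q = 0"
    using sym_bilinear_form_hyperbolic_pair[OF hyp_form_sym_bilinear[OF g l]] by blast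
  have "?A (e, 0) p = 0 \<and> ?A (e, 0) q = 0" if "e \<in> E" for e
  proof (rule perp)
    show "?A (e, 0) (n, 0) = 0"
      using n(1) sy by (simp add: hyp_form_def radical_def)
    show "?A (e, 0) (-t, 1) = 0"
      using t[OF that] bl by (simp add: hyp_form_def bilinear_rneg)
  qed
  with pq show thesis
    using that by blast
qed

lemma hyp_form_canonical_basis_set:
  fixes g :: "'a::euclidean_space \<Rightarrow> 'a \<Rightarrow> real"
  assumes g: "sym_bilinear_form g" and l: "linear l"
    and S: "canonical_basis_set g (insert n E)" "n \<notin> E"
    and n: "n \<in> radical g" "l n \<noteq> 0" and E: "\<forall>e\<in>E. g e e \<noteq> 0"
  obtains S' where "canonical_basis_set (hyp_form g l l2) S'"
    "image_mset (\<lambda>X. hyp_form g l l2 X X) (mset_set S') = {#-1, 1#} + image_mset (\<lambda>e. g e e) (mset_set E)"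
proof -
  let ?A = "hyp_form g l l2"
  let ?T = "(\<lambda>e. (e, 0::real)) ` E"
  have finE: "finite E" and orthE: "orthogonal_set g E" and diagE: "\<forall>e\<in>E. g e e \<in> {-1, 1}"
    using S(1) E by (auto simp: canonical_basis_set_def pairwise_insert)
  obtain p q where pq: "?A p p = 1" "?A q q = -1" "?A p q = 0"
    and perp: "\<forall>e\<in>E. ?A (e, 0) p = 0 \<and> ?A (e, 0) q = 0"
    using hyp_form_hyperbolic_pair[OF g l finE orthE diagE n] by blast
  have inj: "inj_on (\<lambda>e. (e, 0::real)) E"
    by (simp add: inj_on_def)
  have "orthogonal_set ?A ?T"
    using orthE by (auto simp: pairwise_def hyp_form_def)
  moreover have "card ?T + 2 = DIM('a \<times> real)"
    using canonical_basis_set_card[OF S(1)] finE S(2) card_image[OF inj] DIM_positive[where 'a='a]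
    by simp
  moreover have "image_mset (\<lambda>X. ?A X X) (mset_set ?T) = image_mset (\<lambda>e. g e e) (mset_set E)"
    by (simp flip: image_mset_mset_set[OF inj] add: multiset.map_comp comp_def hyp_form_def)
  ultimately show thesis
    using canonical_basis_set_insert_hyperbolic_pair[OF hyp_form_sym_bilinear[OF g l, of l2], of ?T p q]
      finE diagE pq perp that
    by (auto simp: hyp_form_def)
qed

lemma lorentzian_sig_hyperbolic_plus_iff:
  assumes "set_mset R \<subseteq> {-1, 1}"
  shows "lorentzian_sig ({#-1, 1#} + R) \<longleftrightarrow> -1 \<notin># R"
proof -
  have "lorentzian_sig ({#-1, 1#} + R) \<longleftrightarrow> R = replicate_mset (size R) 1"
    by (simp add: lorentzian_sig_def)
  also have "\<dots> \<longleftrightarrow> set_mset R \<subseteq> {1}"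
    by (metis set_mset_replicate_mset_subset set_mset_subset_singletonD empty_subsetI subset_refl)
  also have "\<dots> \<longleftrightarrow> -1 \<notin># R"
    using assms by auto
  finally show ?thesis .
qed

theorem lemma2p3:
  fixes g :: "'a::euclidean_space \<Rightarrow> 'a \<Rightarrow> real"
    and l :: "'a \<Rightarrow> real"
    and l2 :: real
  assumes "sym_bilinear_form g"
    and "linear l"
    and "nondegenerate (hyp_form g l l2)"
    and "radical g \<noteq> {0}"
  shows "signature (hyp_form g l l2) = {#-1, 1#} + (signature g - {#0#})
         \<and> (lorentzian_sig (signature (hyp_form g l l2)) \<longleftrightarrow> (\<forall>x. g x x \<ge> 0))"
proof -
  have bl: "bilinear g"
    using assms(1) by (simp add: sym_bilinear_form_def)
  obtain S where S: "canonical_basis_set g S"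
    using canonical_basis_set_exists[OF assms(1)] .
  obtain n E where S_eq: "S = insert n E" and "n \<notin> E" and n: "n \<in> radical g" "l n \<noteq> 0"
    and E: "\<forall>e\<in>E. g e e \<noteq> 0"
    using hyp_form_unique_isotropic_basis_vector[OF assms S] .
  define R where "R = image_mset (\<lambda>e. g e e) (mset_set E)"
  have fin: "finite E"
    using S by (simp add: S_eq canonical_basis_set_def)
  have "signature g = add_mset 0 R"
    using signature_eq_canonical_basis_set[OF bl S] n(1) fin \<open>n \<notin> E\<close>
    unfolding S_eq by (simp add: R_def radical_def)
  moreover obtain S' where S': "canonical_basis_set (hyp_form g l l2) S'"
    and "image_mset (\<lambda>X. hyp_form g l l2 X X) (mset_set S') = {#-1, 1#} + R"
    using hyp_form_canonical_basis_set[OF assms(1,2) S[unfolded S_eq] \<open>n \<notin> E\<close> n E]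
    unfolding R_def by blast
  then have "signature (hyp_form g l l2) = {#-1, 1#} + R"
    using signature_eq_canonical_basis_set[OF _ S'] hyp_form_sym_bilinear[OF assms(1,2)]
    by (simp add: sym_bilinear_form_def)
  moreover have "set_mset R \<subseteq> {-1, 1}"
    using S E fin by (auto simp: R_def S_eq canonical_basis_set_def)
  ultimately show ?thesis
    using lorentzian_sig_hyperbolic_plus_iff sym_bilinear_form_nonneg_iff_signature[OF assms(1)] by simp
qed

end
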